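(* Let $n$ be a positive integer and let $\alpha,\beta,\gamma,\delta: \mathcal{P}(n) \to [0,\infty)$ satisfy \[ \alpha(A)\beta(B) \leq \gamma(B \setminus A)\,\delta(A \setminus B) \quad \text{for all } A,B \in \mathcal{P}(n). \] Then \[ \Big(\sum_{A \in \mathcal{P}(n)}\alpha(A)\Big)\Big(\sum_{B \in \mathcal{P}(n)}\beta(B)\Big) \leq \Big(\sum_{C \in \mathcal{P}(n)}\gamma(C)\Big)\Big(\sum_{D \in \mathcal{P}(n)}\delta(D)\Big). \]
   Context: $[n]=\{1,\dots,n\}$ and $\mathcal{P}(n)$ denotes the power set of $[n]$. *)

theory Defs
  imports Complex_Main
begin

end

theory Submission
  imports Defs
begin

(* The inequality is proved for the power set of an arbitrary finite set S, by
   induction on S.  For x \<notin> T, every function f on Pow (insert x T) is "collapsed"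
   to the function  A \<mapsto> f A + f (insert x A)  on Pow T; this preserves the total
   sum over the power set (sum_Pow_insert).  The heart of the argument is that
   collapsing all four functions preserves the hypothesis
      \<alpha> A * \<beta> B \<le> \<gamma> (B - A) * \<delta> (A - B)
   (collapse_preserves_hypothesis).  For fixed A, B \<subseteq> T this reduces to the
   one-point case of the theorem, an inequality between eight nonnegative reals
   (two_point_inequality), which in turn rests on the elementary fact that
   p, q \<le> c and p * q \<le> c * d imply p + q \<le> c + d. *)

lemma sum_le_if_prod_le:
  fixes p q c d :: real
  assumes "0 \<le> p" "0 \<le> q" "0 \<le> d" and "p \<le> c" "q \<le> c" and "p * q \<le> c * d"
  shows "p + q \<le> c + d"
proof (cases "c = 0")
  case True
  then show ?thesis using assms by auto
next
  case False
  with assms have c_pos: "0 < c" by auto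
  have "0 \<le> (c - p) * (c - q)" using assms by auto
  then have "c * (p + q) \<le> c * c + p * q" by (simp add: algebra_simps)
  also have "\<dots> \<le> c * (c + d)" using assms by (simp add: algebra_simps)
  finally show ?thesis using c_pos by simp
qed

text \<open>The theorem for a one-element ground set {x}: the values at {} and {x} are
  indexed 0 and 1, and the four hypotheses are those for the pairs
  (A, B) = ({},{}), ({x},{x}), ({},{x}), ({x},{}).\<close>

lemma two_point_inequality:
  fixes a0 a1 b0 b1 c0 c1 d0 d1 :: real
  assumes nonneg: "0 \<le> a0" "0 \<le> a1" "0 \<le> b0" "0 \<le> b1" "0 \<le> c1" "0 \<le> d1"
    and h00: "a0 * b0 \<le> c0 * d0" and h11: "a1 * b1 \<le> c0 * d0"
    and h01: "a0 * b1 \<le> c1 * d0" and h10: "a1 * b0 \<le> c0 * d1"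
  shows "(a0 + a1) * (b0 + b1) \<le> (c0 + c1) * (d0 + d1)"
proof -
  have "(a0 * b0) * (a1 * b1) = (a0 * b1) * (a1 * b0)" by (simp add: algebra_simps)
  also have "\<dots> \<le> (c1 * d0) * (c0 * d1)"
  proof (rule mult_mono[OF h01 h10])
    show "0 \<le> c1 * d0" using h01 nonneg by (metis mult_nonneg_nonneg order.trans)
  qed (use nonneg in simp_all)
  finally have "(a0 * b0) * (a1 * b1) \<le> (c0 * d0) * (c1 * d1)" by (simp add: algebra_simps)
  then have diagonal: "a0 * b0 + a1 * b1 \<le> c0 * d0 + c1 * d1"
    using sum_le_if_prod_le h00 h11 nonneg by simp
  show ?thesis using diagonal h01 h10 by (simp add: algebra_simps)
qed

definition collapse :: "'a \<Rightarrow> ('a set \<Rightarrow> real) \<Rightarrow> 'a set \<Rightarrow> real" where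
  "collapse x f A = f A + f (insert x A)"

lemma sum_Pow_insert:
  assumes "finite T" "x \<notin> T"
  shows "(\<Sum>A\<in>Pow (insert x T). f A) = (\<Sum>A\<in>Pow T. collapse x f A)"
proof -
  have inj: "inj_on (insert x) (Pow T)"
    using assms(2) by (intro inj_onI) (metis Pow_iff insert_ident subsetD)
  have disjoint: "Pow T \<inter> insert x ` Pow T = {}" using assms(2) by auto
  have "(\<Sum>A\<in>Pow (insert x T). f A) = (\<Sum>A\<in>Pow T. f A) + (\<Sum>A\<in>insert x ` Pow T. f A)"
    unfolding Pow_insert using assms(1) disjoint by (intro sum.union_disjoint) auto
  also have "(\<Sum>A\<in>insert x ` Pow T. f A) = (\<Sum>A\<in>Pow T. f (insert x A))"
    using sum.reindex[OF inj] by simp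
  finally show ?thesis by (simp add: sum.distrib collapse_def)
qed

lemma collapse_nonneg:
  assumes "\<And>A. A \<in> Pow (insert x T) \<Longrightarrow> 0 \<le> f A" and "A \<in> Pow T"
  shows "0 \<le> collapse x f A"
  using assms unfolding collapse_def by (simp add: subset_insertI2)

text \<open>For
  A, B \<subseteq> T, the four choices of whether to add x to A and to B give exactly
  the four hypotheses of the one-point case.\<close>

lemma collapse_preserves_hypothesis:
  fixes \<alpha> \<beta> \<gamma> \<delta> :: "'a set \<Rightarrow> real"
  assumes "x \<notin> T"
    and nonneg: "\<And>A. A \<in> Pow (insert x T) \<Longrightarrow> 0 \<le> \<alpha> A \<and> 0 \<le> \<beta> A \<and> 0 \<le> \<gamma> A \<and> 0 \<le> \<delta> A"
    and hyp: "\<And>A B. A \<in> Pow (insert x T) \<Longrightarrow> B \<in> Pow (insert x T) \<Longrightarrow>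
                \<alpha> A * \<beta> B \<le> \<gamma> (B - A) * \<delta> (A - B)"
    and A: "A \<in> Pow T" and B: "B \<in> Pow T"
  shows "collapse x \<alpha> A * collapse x \<beta> B \<le> collapse x \<gamma> (B - A) * collapse x \<delta> (A - B)"
proof -
  have x_notin: "x \<notin> A" "x \<notin> B" using A B assms(1) by auto
  have members: "A \<in> Pow (insert x T)" "insert x A \<in> Pow (insert x T)"
    "B \<in> Pow (insert x T)" "insert x B \<in> Pow (insert x T)"
    "insert x (B - A) \<in> Pow (insert x T)" "insert x (A - B) \<in> Pow (insert x T)"
    using A B by auto
  have "\<alpha> (insert x A) * \<beta> (insert x B) \<le> \<gamma> (B - A) * \<delta> (A - B)"
    using hyp[of "insert x A" "insert x B"] members x_notin by (simp add: insert_Diff_if)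
  moreover have "\<alpha> A * \<beta> (insert x B) \<le> \<gamma> (insert x (B - A)) * \<delta> (A - B)"
    using hyp[of A "insert x B"] members x_notin by (simp add: insert_Diff_if)
  moreover have "\<alpha> (insert x A) * \<beta> B \<le> \<gamma> (B - A) * \<delta> (insert x (A - B))"
    using hyp[of "insert x A" B] members x_notin by (simp add: insert_Diff_if)
  ultimately show ?thesis
    unfolding collapse_def
    using two_point_inequality hyp[of A B] nonneg members by simp
qed

theorem four_functions_Pow:
  fixes S :: "'a set" and \<alpha> \<beta> \<gamma> \<delta> :: "'a set \<Rightarrow> real"
  assumes "finite S"
    and "\<And>A. A \<in> Pow S \<Longrightarrow> 0 \<le> \<alpha> A \<and> 0 \<le> \<beta> A \<and> 0 \<le> \<gamma> A \<and> 0 \<le> \<delta> A"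
    and "\<And>A B. A \<in> Pow S \<Longrightarrow> B \<in> Pow S \<Longrightarrow> \<alpha> A * \<beta> B \<le> \<gamma> (B - A) * \<delta> (A - B)"
  shows "(\<Sum>A\<in>Pow S. \<alpha> A) * (\<Sum>B\<in>Pow S. \<beta> B) \<le> (\<Sum>C\<in>Pow S. \<gamma> C) * (\<Sum>D\<in>Pow S. \<delta> D)"
  using assms
proof (induction S arbitrary: \<alpha> \<beta> \<gamma> \<delta> rule: finite_induct)
  case empty
  then show ?case by simp
next
  case (insert x T)
  have "(\<Sum>A\<in>Pow T. collapse x \<alpha> A) * (\<Sum>B\<in>Pow T. collapse x \<beta> B)
          \<le> (\<Sum>C\<in>Pow T. collapse x \<gamma> C) * (\<Sum>D\<in>Pow T. collapse x \<delta> D)"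
  proof (rule insert.IH)
    show "\<And>A. A \<in> Pow T \<Longrightarrow> 0 \<le> collapse x \<alpha> A \<and> 0 \<le> collapse x \<beta> A \<and>
                               0 \<le> collapse x \<gamma> A \<and> 0 \<le> collapse x \<delta> A"
      using insert.prems(1) by (meson collapse_nonneg)
    show "\<And>A B. A \<in> Pow T \<Longrightarrow> B \<in> Pow T \<Longrightarrow>
            collapse x \<alpha> A * collapse x \<beta> B \<le> collapse x \<gamma> (B - A) * collapse x \<delta> (A - B)"
      using collapse_preserves_hypothesis[OF insert.hyps(2) insert.prems] .
  qed
  then show ?case by (simp only: sum_Pow_insert[OF insert.hyps])
qed

theorem lemma2p3:
  fixes n :: nat and \<alpha> \<beta> \<gamma> \<delta> :: "nat set \<Rightarrow> real"
  assumes "n \<ge> 1"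
    and "\<And>A. A \<in> Pow {1..n} \<Longrightarrow> \<alpha> A \<ge> 0"
    and "\<And>A. A \<in> Pow {1..n} \<Longrightarrow> \<beta> A \<ge> 0"
    and "\<And>A. A \<in> Pow {1..n} \<Longrightarrow> \<gamma> A \<ge> 0"
    and "\<And>A. A \<in> Pow {1..n} \<Longrightarrow> \<delta> A \<ge> 0"
    and "\<And>A B. A \<in> Pow {1..n} \<Longrightarrow> B \<in> Pow {1..n} \<Longrightarrow>
           \<alpha> A * \<beta> B \<le> \<gamma> (B - A) * \<delta> (A - B)"
  shows "(\<Sum>A\<in>Pow {1..n}. \<alpha> A) * (\<Sum>B\<in>Pow {1..n}. \<beta> B)
           \<le> (\<Sum>C\<in>Pow {1..n}. \<gamma> C) * (\<Sum>D\<in>Pow {1..n}. \<delta> D)"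
  using four_functions_Pow[of "{1..n}" \<alpha> \<beta> \<gamma> \<delta>] assms(2-6) by simp

end
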